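(* Let $(X,d)$ be a Hadamard space and let $S,T:\ell^\infty(\mathbb Z^s,X)\to\ell^\infty(\mathbb Z^s,X)$ be maps. Suppose: (i) there are a function $D:\ell^\infty(\mathbb Z^s,X)\to\mathbb R_{\ge0}$, a real $0\le\gamma<1$ and a positive integer $n_0$ with $D(S^nx)\le\gamma^{\lfloor n/n_0\rfloor}D(x)$ for all $x\in\ell^\infty(\mathbb Z^s,X)$ and $n\in\mathbb N$; (ii) $T$ is convergent and $d_\infty(Tx,Ty)\le d_\infty(x,y)$ for all $x,y\in\ell^\infty(\mathbb Z^s,X)$; (iii) there is $C\ge0$ with $d_\infty(Sx,Tx)\le C\,D(x)$ for all $x\in\ell^\infty(\mathbb Z^s,X)$. Then $S$ is convergent.
   Context: Hadamard space: complete metric space $(X,d)$ such that for any $x_0,x_1\in X$ there is $y$ with $d(z,y)^2\le\frac12d(z,x_0)^2+\frac12d(z,x_1)^2-\frac14d(x_0,x_1)^2$ for all $z$. $d_\infty(x,y)=\sup_{j\in\mathbb Z^s}d(x_j,y_j)$. A map $S:\ell^\infty(\mathbb Z^s,X)\to\ell^\infty(\mathbb Z^s,X)$ is convergent if for every $x$ there is a continuous $S^\infty x:\mathbb R^s\to X$ with $\sup_{j}d(S^\infty x(j/2^n),(S^nx)_j)\to0$ as $n\to\infty$. *)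

theory Defs
  imports "HOL-Analysis.Analysis"
begin

definition hadamard_space :: "'a::metric_space set \<Rightarrow> bool" where
  "hadamard_space X \<longleftrightarrow> complete X \<and>
     (\<forall>x0\<in>X. \<forall>x1\<in>X. \<exists>y\<in>X. \<forall>z\<in>X.
        (dist z y)\<^sup>2 \<le> (dist z x0)\<^sup>2 / 2 + (dist z x1)\<^sup>2 / 2 - (dist x0 x1)\<^sup>2 / 4)"

definition linf :: "(int ^ 's \<Rightarrow> 'a::metric_space) set" where
  "linf = {x. bounded (range x)}"

definition dinf :: "(int ^ 's \<Rightarrow> 'a::metric_space) \<Rightarrow> (int ^ 's \<Rightarrow> 'a) \<Rightarrow> real" where
  "dinf x y = (SUP j. dist (x j) (y j))"

definition maps_linf :: "((int ^ 's \<Rightarrow> 'a::metric_space) \<Rightarrow> (int ^ 's \<Rightarrow> 'a)) \<Rightarrow> bool" where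
  "maps_linf S \<longleftrightarrow> (\<forall>x\<in>linf. S x \<in> linf)"

definition dyadic :: "nat \<Rightarrow> int ^ 's \<Rightarrow> real ^ 's" where
  "dyadic n j = (\<chi> i. real_of_int (j $ i) / 2 ^ n)"

text \<open>Convergence of a subdivision-type map: the supremum over j of the
  distances tends to 0 (written out with epsilon, i.e. uniformly in j).\<close>
definition convergent_scheme :: "((int ^ 's \<Rightarrow> 'a::metric_space) \<Rightarrow> (int ^ 's \<Rightarrow> 'a)) \<Rightarrow> bool" where
  "convergent_scheme S \<longleftrightarrow> (\<forall>x\<in>linf. \<exists>f :: real ^ 's \<Rightarrow> 'a. continuous_on UNIV f \<and>
     (\<forall>e>0. \<exists>N. \<forall>n\<ge>N. \<forall>j. dist (f (dyadic n j)) ((S ^^ n) x j) \<le> e))"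

end

theory Submission
  imports Defs
begin

(* Fix x.  Running k steps of S and then T forever gives a
   continuous limit F_k of T applied to S^k x; by a telescoping argument, T^m(S^k x)
   stays within E k = C D(x) n0/(1-gamma) gamma^(k div n0) of S^(m+k) x.  Rescaled
   by 2^k, the F_k become continuous functions g_k that approximate the dyadic data
   of S^n x up to E k.  A general lemma about such approximants (they are uniformly
   Cauchy, so converge uniformly to a continuous limit, which then fits the data)
   finishes the proof. *)

section \<open>The sup-distance on bounded sequences\<close>

text \<open>For bounded sequences the supremum defining dinf is taken over a bounded set,
  so dinf dominates every pointwise distance and is a pseudometric.\<close>

lemma linf_bdd:
  assumes "x \<in> linf" "y \<in> linf"
  shows "bdd_above (range (\<lambda>j. dist (x j) (y j)))"
proof -
  obtain a e where a: "\<forall>z\<in>range x. dist a z \<le> e"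
    using assms(1) unfolding linf_def bounded_def by blast
  obtain b f where b: "\<forall>z\<in>range y. dist b z \<le> f"
    using assms(2) unfolding linf_def bounded_def by blast
  have "dist (x j) (y j) \<le> e + dist a b + f" for j
  proof -
    have "dist (x j) (y j) \<le> dist (x j) a + dist a b + dist b (y j)"
      using dist_triangle[of "x j" "y j" a] dist_triangle[of a "y j" b] by linarith
    also have "\<dots> \<le> e + dist a b + f" using a b by (simp add: dist_commute add_mono)
    finally show ?thesis .
  qed
  then show ?thesis by (intro bdd_aboveI) auto
qed

lemma dinf_ge: "x \<in> linf \<Longrightarrow> y \<in> linf \<Longrightarrow> dist (x j) (y j) \<le> dinf x y"
  unfolding dinf_def by (rule cSUP_upper[OF _ linf_bdd]) auto

lemma dinf_le: "(\<And>j. dist (x j) (y j) \<le> B) \<Longrightarrow> dinf x y \<le> B"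
  unfolding dinf_def by (rule cSUP_least) auto

lemma dinf_commute: "dinf x y = dinf y x"
  unfolding dinf_def by (simp add: dist_commute)

lemma dinf_triangle:
  assumes "x \<in> linf" "y \<in> linf" "z \<in> linf"
  shows "dinf x z \<le> dinf x y + dinf y z"
proof (rule dinf_le)
  fix j
  have "dist (x j) (z j) \<le> dist (x j) (y j) + dist (y j) (z j)" by (rule dist_triangle)
  also have "\<dots> \<le> dinf x y + dinf y z" using assms by (intro add_mono dinf_ge) auto
  finally show "dist (x j) (z j) \<le> dinf x y + dinf y z" .
qed

lemma funpow_linf: "maps_linf S \<Longrightarrow> x \<in> linf \<Longrightarrow> (S ^^ n) x \<in> linf"
  by (induction n) (auto simp: maps_linf_def)

lemma funpow_nonexpansive:
  assumes "maps_linf T" "\<forall>x\<in>linf. \<forall>y\<in>linf. dinf (T x) (T y) \<le> dinf x y"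
    and "x \<in> linf" "y \<in> linf"
  shows "dinf ((T ^^ m) x) ((T ^^ m) y) \<le> dinf x y"
proof (induction m)
  case (Suc m)
  have "dinf ((T ^^ Suc m) x) ((T ^^ Suc m) y) \<le> dinf ((T ^^ m) x) ((T ^^ m) y)"
    using assms funpow_linf[OF assms(1)] by simp
  then show ?case using Suc by linarith
qed simp

lemma telescope:
  assumes "maps_linf S" "maps_linf T"
    and "\<forall>x\<in>linf. \<forall>y\<in>linf. dinf (T x) (T y) \<le> dinf x y"
    and "\<forall>x\<in>linf. dinf (S x) (T x) \<le> C * D x"
    and "y \<in> linf"
  shows "dinf ((T ^^ m) y) ((S ^^ m) y) \<le> C * (\<Sum>i<m. D ((S ^^ i) y))"
  using assms(5)
proof (induction m arbitrary: y)
  case 0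
  then show ?case by (simp add: dinf_def)
next
  case (Suc m)
  have Sy: "S y \<in> linf" "T y \<in> linf" using Suc.prems assms unfolding maps_linf_def by auto
  have "dinf ((T ^^ Suc m) y) ((S ^^ Suc m) y) = dinf ((T ^^ m) (T y)) ((S ^^ m) (S y))"
    by (simp only: funpow_Suc_right o_def)
  also have "\<dots> \<le> dinf ((T ^^ m) (T y)) ((T ^^ m) (S y)) + dinf ((T ^^ m) (S y)) ((S ^^ m) (S y))"
    using Sy by (intro dinf_triangle funpow_linf[OF assms(1)] funpow_linf[OF assms(2)]) auto
  also have "\<dots> \<le> dinf (T y) (S y) + C * (\<Sum>i<m. D ((S ^^ i) (S y)))"
    using Sy by (intro add_mono funpow_nonexpansive[OF assms(2,3)] Suc.IH) auto
  also have "\<dots> \<le> C * D y + C * (\<Sum>i<m. D ((S ^^ Suc i) y))"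
    using assms(4) Suc.prems by (simp add: dinf_commute funpow_Suc_right del: funpow.simps)
  also have "\<dots> = C * (\<Sum>i<Suc m. D ((S ^^ i) y))"
    by (simp only: sum.lessThan_Suc_shift funpow_0 id_apply distrib_left)
  finally show ?case .
qed

section \<open>Geometric decay of the discrepancy\<close>

text \<open>The blocked geometric series gamma^(i div n0), in which every power of gamma
  is repeated n0 times, has partial sums bounded by n0/(1-gamma).\<close>

lemma blocked_geometric_sum_bound:
  fixes \<gamma> :: real
  assumes "0 \<le> \<gamma>" "\<gamma> < 1" "n0 > 0"
  shows "(\<Sum>i<m. \<gamma> ^ (i div n0)) \<le> n0 / (1 - \<gamma>)"
proof -
  have block: "(\<Sum>i\<in>{q * n0..<q * n0 + n0}. \<gamma> ^ (i div n0)) = n0 * \<gamma> ^ q" for q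
  proof -
    have "i div n0 = q" if "i \<in> {q * n0..<q * n0 + n0}" for i
      using that by (intro div_nat_eqI) (auto simp: mult.commute)
    then show ?thesis by simp
  qed
  have "m \<le> m * n0" using assms by simp
  then have "(\<Sum>i<m. \<gamma> ^ (i div n0)) \<le> (\<Sum>i<m * n0. \<gamma> ^ (i div n0))"
    using assms by (intro sum_mono2) auto
  also have "\<dots> = (\<Sum>q<m. \<Sum>i\<in>{q * n0..<q * n0 + n0}. \<gamma> ^ (i div n0))"
    by (rule sum.nat_group[symmetric])
  also have "\<dots> = n0 * ((1 - \<gamma> ^ m) / (1 - \<gamma>))"
    using assms by (simp add: block sum_distrib_left[symmetric] sum_gp_strict)
  also have "\<dots> \<le> n0 * (1 / (1 - \<gamma>))"
    using assms by (intro mult_left_mono divide_right_mono) auto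
  finally show ?thesis by simp
qed

lemma blocked_geometric_tail_bound:
  fixes \<gamma> :: real
  assumes "0 \<le> \<gamma>" "\<gamma> < 1" "n0 > 0"
  shows "(\<Sum>i<m. \<gamma> ^ ((k + i) div n0)) \<le> \<gamma> ^ (k div n0) * (n0 / (1 - \<gamma>))"
proof -
  have "\<gamma> ^ ((k + i) div n0) \<le> \<gamma> ^ (k div n0) * \<gamma> ^ (i div n0)" for i
  proof -
    have "k div n0 + i div n0 \<le> (k + i) div n0" using div_add1_eq[of k i n0] by linarith
    then have "\<gamma> ^ ((k + i) div n0) \<le> \<gamma> ^ (k div n0 + i div n0)"
      using assms by (intro power_decreasing) auto
    then show ?thesis by (simp add: power_add)
  qed
  then have "(\<Sum>i<m. \<gamma> ^ ((k + i) div n0)) \<le> \<gamma> ^ (k div n0) * (\<Sum>i<m. \<gamma> ^ (i div n0))"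
    by (simp add: sum_distrib_left sum_mono)
  also have "\<dots> \<le> \<gamma> ^ (k div n0) * (n0 / (1 - \<gamma>))"
    using assms by (intro mult_left_mono blocked_geometric_sum_bound) auto
  finally show ?thesis .
qed

lemma blocked_power_tendsto_zero:
  fixes \<gamma> :: real
  assumes "0 \<le> \<gamma>" "\<gamma> < 1" "n0 > 0"
  shows "(\<lambda>k. \<gamma> ^ (k div n0)) \<longlonglongrightarrow> 0"
  by (rule filterlim_compose[OF LIMSEQ_power_zero filterlim_at_top_div_const_nat])
     (use assms in auto)

lemma shadowing_bound:
  fixes \<gamma> C :: real
  assumes "maps_linf S" "maps_linf T"
    and "\<forall>x\<in>linf. \<forall>n. D ((S ^^ n) x) \<le> \<gamma> ^ (n div n0) * D x"
    and "\<forall>x\<in>linf. \<forall>y\<in>linf. dinf (T x) (T y) \<le> dinf x y"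
    and "\<forall>x\<in>linf. dinf (S x) (T x) \<le> C * D x"
    and "0 \<le> \<gamma>" "\<gamma> < 1" "n0 > 0" "C \<ge> 0" "D x \<ge> 0" "x \<in> linf"
  shows "dinf ((T ^^ m) ((S ^^ k) x)) ((S ^^ (m + k)) x)
           \<le> C * D x * (n0 / (1 - \<gamma>)) * \<gamma> ^ (k div n0)"
proof -
  have Skx: "(S ^^ k) x \<in> linf" using funpow_linf[OF assms(1,11)] .
  have "(\<Sum>i<m. D ((S ^^ i) ((S ^^ k) x))) \<le> (\<Sum>i<m. \<gamma> ^ ((k + i) div n0)) * D x"
    unfolding sum_distrib_right
  proof (rule sum_mono)
    fix i
    have "D ((S ^^ i) ((S ^^ k) x)) = D ((S ^^ (k + i)) x)" by (simp add: funpow_add add.commute)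
    also have "\<dots> \<le> \<gamma> ^ ((k + i) div n0) * D x" using assms(3,11) by blast
    finally show "D ((S ^^ i) ((S ^^ k) x)) \<le> \<gamma> ^ ((k + i) div n0) * D x" .
  qed
  also have "\<dots> \<le> \<gamma> ^ (k div n0) * (n0 / (1 - \<gamma>)) * D x"
    using blocked_geometric_tail_bound[OF assms(6-8)] assms(10) by (intro mult_right_mono) auto
  finally have "C * (\<Sum>i<m. D ((S ^^ i) ((S ^^ k) x))) \<le> C * (\<gamma> ^ (k div n0) * (n0 / (1 - \<gamma>)) * D x)"
    using assms(9) by (rule mult_left_mono)
  moreover have "dinf ((T ^^ m) ((S ^^ k) x)) ((S ^^ m) ((S ^^ k) x))
                   \<le> C * (\<Sum>i<m. D ((S ^^ i) ((S ^^ k) x)))"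
    by (rule telescope[OF assms(1,2,4,5) Skx])
  moreover have "(S ^^ m) ((S ^^ k) x) = (S ^^ (m + k)) x" by (simp add: funpow_add)
  ultimately show ?thesis by (simp add: ac_simps)
qed

section \<open>Dyadic points\<close>

lemma dyadic_scale:
  assumes "k \<le> n"
  shows "((2::real) ^ k) *\<^sub>R dyadic n j = dyadic (n - k) j"
proof -
  have "(2::real) ^ n = 2 ^ (n - k) * 2 ^ k" using assms by (simp add: power_add[symmetric])
  then show ?thesis by (simp add: dyadic_def vec_eq_iff field_simps)
qed

lemma dyadic_refine: "dyadic n j = dyadic (n + q) (\<chi> i. 2 ^ q * j $ i)"
  by (simp add: dyadic_def vec_eq_iff power_add field_simps)

lemma dyadic_approx:
  fixes t :: "real ^ 's"
  shows "(\<lambda>n. dyadic n (\<chi> i. \<lfloor>2 ^ n * t $ i\<rfloor>)) \<longlonglongrightarrow> t"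
proof (rule vec_tendstoI)
  fix i
  have l: "(\<lambda>n. t $ i - inverse (2 ^ n)) \<longlonglongrightarrow> t $ i - 0"
    by (intro tendsto_diff tendsto_const LIMSEQ_inverse_realpow_zero) simp
  show "(\<lambda>n. dyadic n (\<chi> i. \<lfloor>2 ^ n * t $ i\<rfloor>) $ i) \<longlonglongrightarrow> t $ i"
  proof (rule tendsto_sandwich[OF _ _ l[simplified] tendsto_const])
    show "\<forall>\<^sub>F n in sequentially. t $ i - inverse (2 ^ n) \<le> dyadic n (\<chi> i. \<lfloor>2 ^ n * t $ i\<rfloor>) $ i"
    proof (intro always_eventually allI)
      fix n :: nat
      have "2 ^ n * t $ i - 1 \<le> real_of_int \<lfloor>2 ^ n * t $ i\<rfloor>" by linarith
      then have "(2 ^ n * t $ i - 1) / 2 ^ n \<le> real_of_int \<lfloor>2 ^ n * t $ i\<rfloor> / 2 ^ n"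
        by (intro divide_right_mono) auto
      then show "t $ i - inverse (2 ^ n) \<le> dyadic n (\<chi> i. \<lfloor>2 ^ n * t $ i\<rfloor>) $ i"
        by (simp add: dyadic_def field_simps)
    qed
    show "\<forall>\<^sub>F n in sequentially. dyadic n (\<chi> i. \<lfloor>2 ^ n * t $ i\<rfloor>) $ i \<le> t $ i"
    proof (intro always_eventually allI)
      fix n :: nat
      have "real_of_int \<lfloor>2 ^ n * t $ i\<rfloor> \<le> 2 ^ n * t $ i" by linarith
      then have "real_of_int \<lfloor>2 ^ n * t $ i\<rfloor> / 2 ^ n \<le> (2 ^ n * t $ i) / 2 ^ n"
        by (intro divide_right_mono) auto
      then show "dyadic n (\<chi> i. \<lfloor>2 ^ n * t $ i\<rfloor>) $ i \<le> t $ i"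
        by (simp add: dyadic_def)
    qed
  qed
qed

lemma dyadic_bound_extends:
  fixes h :: "real ^ 's \<Rightarrow> real"
  assumes "continuous_on UNIV h" "\<And>n j. h (dyadic n j) \<le> B"
  shows "h t \<le> B"
proof (rule tendsto_upperbound[OF _ _ trivial_limit_sequentially])
  show "(\<lambda>n. h (dyadic n (\<chi> i. \<lfloor>2 ^ n * t $ i\<rfloor>))) \<longlonglongrightarrow> h t"
    by (rule continuous_on_tendsto_compose[OF assms(1) dyadic_approx]) auto
  show "\<forall>\<^sub>F n in sequentially. h (dyadic n (\<chi> i. \<lfloor>2 ^ n * t $ i\<rfloor>)) \<le> B"
    using assms(2) by simp
qed

section \<open>Convergence from continuous approximants\<close>

lemma approximants_close:
  fixes g g' :: "real ^ 's \<Rightarrow> 'a::metric_space" and y :: "nat \<Rightarrow> int ^ 's \<Rightarrow> 'a"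
  assumes "continuous_on UNIV g" "continuous_on UNIV g'"
    and fit: "\<And>e. e > 0 \<Longrightarrow> \<exists>N. \<forall>n\<ge>N. \<forall>j. dist (g (dyadic n j)) (y n j) \<le> a + e"
    and fit': "\<And>e. e > 0 \<Longrightarrow> \<exists>N. \<forall>n\<ge>N. \<forall>j. dist (g' (dyadic n j)) (y n j) \<le> b + e"
  shows "dist (g t) (g' t) \<le> a + b"
proof (rule dyadic_bound_extends[where h = "\<lambda>t. dist (g t) (g' t)"])
  show "continuous_on UNIV (\<lambda>t. dist (g t) (g' t))"
    using assms(1,2) by (intro continuous_intros)
  fix n j
  show "dist (g (dyadic n j)) (g' (dyadic n j)) \<le> a + b"
  proof (rule field_le_epsilon)
    fix e :: real assume e: "e > 0"
    obtain N where N: "\<forall>n\<ge>N. \<forall>j. dist (g (dyadic n j)) (y n j) \<le> a + e / 2"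
      using fit[of "e/2"] e by auto
    obtain N' where N': "\<forall>n\<ge>N'. \<forall>j. dist (g' (dyadic n j)) (y n j) \<le> b + e / 2"
      using fit'[of "e/2"] e by auto
    define p where "p = n + max N N'"
    define J :: "int ^ 's" where "J = (\<chi> i. 2 ^ max N N' * j $ i)"
    have pt: "dyadic n j = dyadic p J" unfolding p_def J_def by (rule dyadic_refine)
    have "dist (g (dyadic p J)) (g' (dyadic p J))
            \<le> dist (g (dyadic p J)) (y p J) + dist (g' (dyadic p J)) (y p J)"
      using dist_triangle3[of "g (dyadic p J)" "g' (dyadic p J)" "y p J"]
      by (simp add: dist_commute)
    also have "\<dots> \<le> (a + e / 2) + (b + e / 2)"
      using N N' unfolding p_def by (intro add_mono) auto
    finally show "dist (g (dyadic n j)) (g' (dyadic n j)) \<le> a + b + e" by (simp add: pt)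
  qed
qed

lemma uniformly_cauchy_limit:
  fixes g :: "nat \<Rightarrow> 'b::topological_space \<Rightarrow> 'a::metric_space"
  assumes "complete (UNIV :: 'a set)" "\<And>k. continuous_on UNIV (g k)" "E \<longlonglongrightarrow> 0"
    and close: "\<And>k k' t. dist (g k t) (g k' t) \<le> E k + E k'"
  shows "\<exists>f. continuous_on UNIV f \<and> (\<forall>k t. dist (g k t) (f t) \<le> E k)"
proof -
  have small: "\<exists>K. \<forall>k\<ge>K. E k < e" if "e > 0" for e
    using order_tendstoD(2)[OF assms(3) that] by (simp add: eventually_sequentially)
  have "Cauchy (\<lambda>k. g k t)" for t
  proof (rule metric_CauchyI)
    fix e :: real assume "e > 0"
    then obtain K where K: "\<forall>k\<ge>K. E k < e / 2" using small[of "e/2"] by auto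
    have "dist (g m t) (g n t) < e" if "m \<ge> K" "n \<ge> K" for m n
    proof -
      have "E m < e / 2" "E n < e / 2" using K that by auto
      then show ?thesis using close[of m t n] by linarith
    qed
    then show "\<exists>M. \<forall>m\<ge>M. \<forall>n\<ge>M. dist (g m t) (g n t) < e" by blast
  qed
  then have "\<exists>l. (\<lambda>k. g k t) \<longlonglongrightarrow> l" for t
    using assms(1) unfolding complete_def by blast
  then obtain f where lim: "\<And>t. (\<lambda>k. g k t) \<longlonglongrightarrow> f t" by metis
  have rate: "dist (g k t) (f t) \<le> E k" for k t
  proof (rule tendsto_le[OF trivial_limit_sequentially])
    show "(\<lambda>k'. E k + E k') \<longlonglongrightarrow> E k"
      using tendsto_add[OF tendsto_const assms(3), of "E k"] by simp
    show "(\<lambda>k'. dist (g k t) (g k' t)) \<longlonglongrightarrow> dist (g k t) (f t)"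
      by (intro tendsto_dist tendsto_const lim)
  qed (use close in auto)
  have ulim: "uniform_limit UNIV g f sequentially"
    unfolding uniform_limit_sequentially_iff
  proof (intro allI impI)
    fix e :: real assume "e > 0"
    then obtain K where "\<forall>k\<ge>K. E k < e" using small by auto
    then show "\<exists>N. \<forall>n\<ge>N. \<forall>x\<in>UNIV. dist (g n x) (f x) < e"
      using rate by (meson le_less_trans)
  qed
  have "continuous_on UNIV f"
    by (rule uniform_limit_theorem[OF always_eventually ulim trivial_limit_sequentially])
       (auto intro: assms(2))
  with rate show ?thesis by blast
qed

lemma convergence_from_approximants:
  fixes g :: "nat \<Rightarrow> real ^ 's \<Rightarrow> 'a::metric_space" and y :: "nat \<Rightarrow> int ^ 's \<Rightarrow> 'a"
  assumes "complete (UNIV :: 'a set)" "\<And>k. continuous_on UNIV (g k)" "E \<longlonglongrightarrow> 0"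
    and fit: "\<And>k e. e > 0 \<Longrightarrow> \<exists>N. \<forall>n\<ge>N. \<forall>j. dist (g k (dyadic n j)) (y n j) \<le> E k + e"
  shows "\<exists>f :: real ^ 's \<Rightarrow> 'a. continuous_on UNIV f \<and>
           (\<forall>e>0. \<exists>N. \<forall>n\<ge>N. \<forall>j. dist (f (dyadic n j)) (y n j) \<le> e)"
proof -
  have "dist (g k t) (g k' t) \<le> E k + E k'" for k k' t
    by (rule approximants_close[OF assms(2) assms(2) fit fit])
  then obtain f where f: "continuous_on UNIV f" and rate: "\<And>k t. dist (g k t) (f t) \<le> E k"
    using uniformly_cauchy_limit[where g = g and E = E, OF assms(1-3)] by blast
  have "\<exists>N. \<forall>n\<ge>N. \<forall>j. dist (f (dyadic n j)) (y n j) \<le> e" if e: "e > 0" for e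
  proof -
    obtain K where "\<forall>k\<ge>K. E k < e / 3"
      using order_tendstoD(2)[OF assms(3), of "e/3"] e by (auto simp: eventually_sequentially)
    then have K: "E K < e / 3" by simp
    obtain N where N: "\<forall>n\<ge>N. \<forall>j. dist (g K (dyadic n j)) (y n j) \<le> E K + e / 3"
      using fit[of "e/3" K] e by auto
    have "dist (f (dyadic n j)) (y n j) \<le> e" if "n \<ge> N" for n j
    proof -
      have "dist (f (dyadic n j)) (g K (dyadic n j)) \<le> E K"
        using rate[of K "dyadic n j"] by (simp add: dist_commute)
      moreover have "dist (g K (dyadic n j)) (y n j) \<le> E K + e / 3" using N that by blast
      ultimately show ?thesis
        using dist_triangle[of "f (dyadic n j)" "y n j" "g K (dyadic n j)"] K by linarith
    qed
    then show ?thesis by blast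
  qed
  with f show ?thesis by blast
qed

lemma rescaled_limits_fit:
  fixes S T :: "(int ^ 's \<Rightarrow> 'a::metric_space) \<Rightarrow> (int ^ 's \<Rightarrow> 'a)"
  assumes "convergent_scheme T" "\<And>k. (S ^^ k) x \<in> linf"
    and shadow: "\<And>m k j. dist ((T ^^ m) ((S ^^ k) x) j) ((S ^^ (m + k)) x j) \<le> E k"
  shows "\<exists>g :: nat \<Rightarrow> real ^ 's \<Rightarrow> 'a. (\<forall>k. continuous_on UNIV (g k)) \<and>
           (\<forall>k e. e > 0 \<longrightarrow> (\<exists>N. \<forall>n\<ge>N. \<forall>j. dist (g k (dyadic n j)) ((S ^^ n) x j) \<le> E k + e))"
proof -
  have "\<forall>k. \<exists>F :: real ^ 's \<Rightarrow> 'a. continuous_on UNIV F \<and>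
          (\<forall>e>0. \<exists>N. \<forall>n\<ge>N. \<forall>j. dist (F (dyadic n j)) ((T ^^ n) ((S ^^ k) x) j) \<le> e)"
    using assms(1,2) unfolding convergent_scheme_def by blast
  then obtain F where F_cont: "\<And>k. continuous_on UNIV (F k)"
    and F_lim: "\<And>k e. e > 0 \<Longrightarrow> \<exists>N. \<forall>n\<ge>N. \<forall>j. dist (F k (dyadic n j)) ((T ^^ n) ((S ^^ k) x) j) \<le> e"
    by metis
  define g where "g k t = F k (((2::real) ^ k) *\<^sub>R t)" for k t
  have "continuous_on UNIV (g k)" for k
    unfolding g_def by (intro continuous_on_compose2[OF F_cont] continuous_intros) auto
  moreover have "\<exists>N. \<forall>n\<ge>N. \<forall>j. dist (g k (dyadic n j)) ((S ^^ n) x j) \<le> E k + e"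
    if e: "e > 0" for k e
  proof -
    obtain N where N: "\<forall>n\<ge>N. \<forall>j. dist (F k (dyadic n j)) ((T ^^ n) ((S ^^ k) x) j) \<le> e"
      using F_lim[OF e] by blast
    have "dist (g k (dyadic n j)) ((S ^^ n) x j) \<le> E k + e" if n: "n \<ge> N + k" for n j
    proof -
      have "g k (dyadic n j) = F k (dyadic (n - k) j)"
        unfolding g_def using n by (simp add: dyadic_scale)
      then have "dist (g k (dyadic n j)) ((T ^^ (n - k)) ((S ^^ k) x) j) \<le> e"
        using N n by simp
      moreover have "dist ((T ^^ (n - k)) ((S ^^ k) x) j) ((S ^^ n) x j) \<le> E k"
        using shadow[of "n - k" k j] n by simp
      ultimately show ?thesis
        using dist_triangle[of "g k (dyadic n j)" "(S ^^ n) x j" "(T ^^ (n - k)) ((S ^^ k) x) j"]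
        by linarith
    qed
    then show ?thesis by blast
  qed
  ultimately show ?thesis by blast
qed

theorem mainTheorem4:
  fixes S T :: "(int ^ 's \<Rightarrow> 'a::metric_space) \<Rightarrow> (int ^ 's \<Rightarrow> 'a)"
    and D :: "(int ^ 's \<Rightarrow> 'a) \<Rightarrow> real"
    and \<gamma> C :: real and n0 :: nat
  assumes "hadamard_space (UNIV :: 'a set)"
    and "maps_linf S" and "maps_linf T"
    and "\<forall>x\<in>linf. D x \<ge> 0"
    and "0 \<le> \<gamma>" and "\<gamma> < 1" and "n0 > 0"
    and "\<forall>x\<in>linf. \<forall>n. D ((S ^^ n) x) \<le> \<gamma> ^ (n div n0) * D x"
    and "convergent_scheme T"
    and "\<forall>x\<in>linf. \<forall>y\<in>linf. dinf (T x) (T y) \<le> dinf x y"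
    and "C \<ge> 0"
    and "\<forall>x\<in>linf. dinf (S x) (T x) \<le> C * D x"
  shows "convergent_scheme S"
  unfolding convergent_scheme_def
proof
  fix x :: "int ^ 's \<Rightarrow> 'a" assume x: "x \<in> linf"
  have complete: "complete (UNIV :: 'a set)" using assms(1) unfolding hadamard_space_def by blast
  have orbit: "(S ^^ k) x \<in> linf" for k using funpow_linf[OF assms(2) x] .
  define E where "E k = C * D x * (n0 / (1 - \<gamma>)) * \<gamma> ^ (k div n0)" for k
  have E_lim: "E \<longlonglongrightarrow> 0"
    unfolding E_def using blocked_power_tendsto_zero[OF assms(5-7)] by (rule tendsto_mult_right_zero)
  have "dist ((T ^^ m) ((S ^^ k) x) j) ((S ^^ (m + k)) x j) \<le> E k" for m k j
    using shadowing_bound[OF assms(2,3,8,10,12,5-7,11) _ x, of m k] assms(4) x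
      dinf_ge[OF funpow_linf[OF assms(3) orbit] orbit]
    unfolding E_def by (meson order_trans)
  then obtain g where g_cont: "\<forall>k. continuous_on UNIV (g k)"
    and g_fit: "\<forall>k e. e > 0 \<longrightarrow> (\<exists>N. \<forall>n\<ge>N. \<forall>j. dist (g k (dyadic n j)) ((S ^^ n) x j) \<le> E k + e)"
    using rescaled_limits_fit[OF assms(9) orbit] by blast
  show "\<exists>f :: real ^ 's \<Rightarrow> 'a. continuous_on UNIV f \<and>
      (\<forall>e>0. \<exists>N. \<forall>n\<ge>N. \<forall>j. dist (f (dyadic n j)) ((S ^^ n) x j) \<le> e)"
    by (rule convergence_from_approximants[where g = g, OF complete _ E_lim])
       (use g_cont g_fit in auto)
qed

end
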